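(* Let $N\ge 1$, $r\in\{1,\dots,N\}$, $m\ge 2$ an integer, and $\alpha\in\mathbb{C}^{N\times N}$ (independent of $\epsilon$). Let $\beta_{m-1},\beta_m$ be $N\times N$ matrix-valued asymptotic expansions in a small parameter $\epsilon\to 0$ of the form $$\beta_{m-1}=\beta_{m-1,0}+\beta_{m-1,1}\epsilon+O(\epsilon^2),\qquad \beta_m=\beta_{m,0}+\beta_{m,1}\epsilon+O(\epsilon^2),\qquad \beta_{m-1,i},\beta_{m,i}\in\mathbb{C}^{N\times N},$$ where all entries in the first $r$ rows of $\beta_{m,0}$ vanish, and $\det\beta_m=O(\epsilon^{r})$. Define $\beta_{m+1},\beta_{m+2},\beta_{m+3},\beta_{m+4}$ by the matrix discrete Painlevé I recursion $$\beta_{n+1}=n\beta_n^{-1}-\beta_{n-1}-\beta_n-\alpha .$$ Assume that, as $\epsilon\to0$, $$\det\beta_{m+1}=O(\epsilon^{-r}),\quad \det\beta_{m+2}=O(\epsilon^{-r}),\quad \det\beta_{m+3}=O(\epsilon^{r}),\quad \det\beta_{m+4}=O(1).$$ Then the singularity is confined with confinement time $4$: $\beta_{m+4}=O(1)$ as $\epsilon\to0$, i.e. $\beta_{m+4}$ has an asymptotic expansion with no negative powers of $\epsilon$ (and, by the hypothesis on its determinant, it is invertible at $\epsilon=0$), so that neither poles nor zeros persist at step $m+4$.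
   Context: All expansions are formal/asymptotic expansions in powers of $\epsilon$ with matrix coefficients; inverses are taken in the ring of such (Laurent) expansions. A condition $\det X=O(\epsilon^{k})$ is understood in the paper's sense of exact order: $\det X=c\,\epsilon^{k}+O(\epsilon^{k+1})$ with $c\neq0$. The confinement time is the minimum number of iterations of the recursion, after the appearance of a zero (a matrix $\beta_m$ with singular leading coefficient), needed to recover a matrix expansion with neither poles (negative powers of $\epsilon$) nor zeros (vanishing determinant at $\epsilon=0$). *)

theory Defs
  imports "Jordan_Normal_Form.Determinant" "HOL-Computational_Algebra.Formal_Laurent_Series"
begin

text \<open>Matrix-valued formal expansions in epsilon are represented as N x N matrices
  whose entries are formal Laurent series in epsilon over the complex numbers.\<close>

definition minv :: "'a::field mat \<Rightarrow> 'a mat" where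
  "minv A = inverse (det A) \<cdot>\<^sub>m adj_mat A"

definition dPI_step :: "nat \<Rightarrow> complex fls mat \<Rightarrow> complex fls mat \<Rightarrow> complex fls mat \<Rightarrow> complex fls mat" where
  "dPI_step n bprev b alpha = of_nat n \<cdot>\<^sub>m minv b - bprev - b - alpha"

definition exact_order :: "complex fls \<Rightarrow> int \<Rightarrow> bool" where
  "exact_order x k \<longleftrightarrow> x \<noteq> 0 \<and> fls_subdegree x = k"

definition no_poles :: "complex fls mat \<Rightarrow> bool" where
  "no_poles A \<longleftrightarrow> (\<forall>i<dim_row A. \<forall>j<dim_col A. fls_subdegree (A $$ (i,j)) \<ge> 0)"

definition coeff_mat :: "complex fls mat \<Rightarrow> int \<Rightarrow> complex mat" where
  "coeff_mat A k = map_mat (\<lambda>x. fls_nth x k) A"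

definition const_mat :: "complex mat \<Rightarrow> complex fls mat" where
  "const_mat A = map_mat fls_const A"

end

theory Submission
  imports Defs
begin

text \<open>Write B for the matrix \<beta>_m at which the zero appears, call a matrix regular if it
  has no poles, and write X \<equiv> Y when X - Y lies in the right ideal B\<O> of B-multiples of
  regular matrices. As det B has order r and det \<beta>_(m+1), det \<beta>_(m+2) have order -r, the
  regular matrices B \<beta>_(m+1) \<equiv> m and B \<beta>_(m+2) \<equiv> -m have determinants of order 0, hence
  regular inverses Q_1, Q_2. Then \<beta>_(m+1)^-1 = Q_1 B and \<beta>_(m+2)^-1 = Q_2 B are regular and
  the recursion gives \<beta>_(m+3) = G B with G = (m+2) Q_2 - (m+1) Q_1 + 1 regular, of
  determinant order 0. The only possible pole of \<beta>_(m+4) is B^-1 ((m+3) G^-1 - B \<beta>_(m+2)),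
  and it cancels: m Q_1 \<equiv> 1 and m Q_2 \<equiv> -1 give m G \<equiv> -(m+3), hence
  (m+3) G^-1 \<equiv> -m \<equiv> B \<beta>_(m+2).\<close>

definition fls_regular :: "complex fls \<Rightarrow> bool" where
  "fls_regular x \<longleftrightarrow> 0 \<le> fls_subdegree x"

lemma fls_regular_0 [simp]: "fls_regular 0"
  and fls_regular_of_nat [simp]: "fls_regular (of_nat k)"
  and fls_regular_numeral [simp]: "fls_regular (numeral w)"
  and fls_regular_const [simp]: "fls_regular (fls_const c)"
  and fls_regular_1 [simp]: "fls_regular 1"
  by (simp_all add: fls_regular_def)

lemma fls_regular_add [simp, intro]: "fls_regular x \<Longrightarrow> fls_regular y \<Longrightarrow> fls_regular (x + y)"
  unfolding fls_regular_def by (cases "x + y = 0") (auto dest!: fls_plus_subdegree)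

lemma fls_regular_uminus [simp, intro]: "fls_regular x \<Longrightarrow> fls_regular (- x)"
  by (simp add: fls_regular_def)

lemma fls_regular_diff [simp, intro]: "fls_regular x \<Longrightarrow> fls_regular y \<Longrightarrow> fls_regular (x - y)"
  using fls_regular_add[of x "- y"] by auto

lemma fls_regular_mult [simp, intro]: "fls_regular x \<Longrightarrow> fls_regular y \<Longrightarrow> fls_regular (x * y)"
  unfolding fls_regular_def by (rule fls_mult_subdegree_ge_0)

lemma fls_regular_power [intro]: "fls_regular x \<Longrightarrow> fls_regular (x ^ k)"
  by (induction k) auto

lemma fls_regular_sum [intro]: "(\<And>k. k \<in> S \<Longrightarrow> fls_regular (f k)) \<Longrightarrow> fls_regular (sum f S)"
  by (induction S rule: infinite_finite_induct) auto

lemma fls_regular_inverse: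
  "fls_subdegree x = 0 \<Longrightarrow> fls_regular (inverse x)"
  by (simp add: fls_regular_def)

lemma no_poles_iff: "no_poles A \<longleftrightarrow> (\<forall>i<dim_row A. \<forall>j<dim_col A. fls_regular (A $$ (i,j)))"
  by (simp add: no_poles_def fls_regular_def)

lemma no_poles_add [intro]:
  "A \<in> carrier_mat n k \<Longrightarrow> B \<in> carrier_mat n k \<Longrightarrow> no_poles A \<Longrightarrow> no_poles B \<Longrightarrow> no_poles (A + B)"
  and no_poles_diff [intro]:
  "A \<in> carrier_mat n k \<Longrightarrow> B \<in> carrier_mat n k \<Longrightarrow> no_poles A \<Longrightarrow> no_poles B \<Longrightarrow> no_poles (A - B)"
  and no_poles_uminus [intro]: "no_poles A \<Longrightarrow> no_poles (- A)"
  and no_poles_smult [intro]: "fls_regular c \<Longrightarrow> no_poles A \<Longrightarrow> no_poles (c \<cdot>\<^sub>m A)"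
  and no_poles_one [intro]: "no_poles (1\<^sub>m n)"
  and no_poles_const_mat [intro]: "no_poles (const_mat M)"
  and no_poles_mat_delete: "no_poles A \<Longrightarrow> no_poles (mat_delete A i j)"
  unfolding no_poles_iff const_mat_def mat_delete_def by auto

lemma no_poles_mult [intro]:
  "A \<in> carrier_mat n k \<Longrightarrow> B \<in> carrier_mat k l \<Longrightarrow> no_poles A \<Longrightarrow> no_poles B \<Longrightarrow> no_poles (A * B)"
  unfolding no_poles_iff by (auto simp: scalar_prod_def intro!: fls_regular_sum fls_regular_mult)

interpretation fps_to_fls_hom: comm_ring_hom "fps_to_fls :: complex fps \<Rightarrow> complex fls"
  by unfold_locales (simp_all add: fls_times_fps_to_fls)

interpretation fps_nth_0_hom: comm_ring_hom "\<lambda>f::complex fps. f $ 0"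
  by unfold_locales (simp_all add: fps_mult_nth_0)

lemma no_poles_eq_map_fps_to_fls:
  "no_poles A \<Longrightarrow> A = map_mat fps_to_fls (map_mat fls_regpart A)"
  unfolding no_poles_def by (intro eq_matI) auto

lemma fls_regular_det: assumes "no_poles A" shows "fls_regular (det A)"
proof -
  have "det A = fps_to_fls (det (map_mat fls_regpart A))"
    by (subst no_poles_eq_map_fps_to_fls[OF assms]) (rule fps_to_fls_hom.hom_det)
  then show ?thesis by (simp add: fls_regular_def fls_subdegree_fls_to_fps_gt0)
qed

lemma det_coeff_mat_0: assumes "no_poles A"
  shows "det (coeff_mat A 0) = fls_nth (det A) 0"
proof -
  define R where "R = map_mat fls_regpart A"
  have "coeff_mat A 0 = map_mat (\<lambda>f. f $ 0) R"
    unfolding coeff_mat_def R_def by (rule eq_matI) auto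
  then have "det (coeff_mat A 0) = det R $ 0" by (simp add: fps_nth_0_hom.hom_det)
  also have "\<dots> = fls_nth (det A) 0"
    unfolding R_def by (subst no_poles_eq_map_fps_to_fls[OF assms]) (simp add: fps_to_fls_hom.hom_det)
  finally show ?thesis .
qed

lemma no_poles_adj_mat: "no_poles A \<Longrightarrow> no_poles (adj_mat A)"
  unfolding adj_mat_def cofactor_def
  by (auto simp: no_poles_iff[of "mat _ _ _"] intro!: fls_regular_mult fls_regular_power
      fls_regular_det no_poles_mat_delete)

lemma no_poles_minv: "no_poles A \<Longrightarrow> fls_subdegree (det A) = 0 \<Longrightarrow> no_poles (minv A)"
  unfolding minv_def by (intro no_poles_smult no_poles_adj_mat fls_regular_inverse)

lemma dim_minv [simp]: "dim_row (minv A) = dim_row A" "dim_col (minv A) = dim_col A"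
  unfolding minv_def adj_mat_def by simp_all

lemma minv_carrier [simp]: "A \<in> carrier_mat n n \<Longrightarrow> minv A \<in> carrier_mat n n"
  unfolding carrier_mat_def by simp

lemma dPI_step_carrier [simp]:
  "bprev \<in> carrier_mat n n \<Longrightarrow> b \<in> carrier_mat n n \<Longrightarrow> alpha \<in> carrier_mat n n \<Longrightarrow>
    dPI_step k bprev b alpha \<in> carrier_mat n n"
  unfolding dPI_step_def by auto

lemma smult_smult_mat: "a \<cdot>\<^sub>m (b \<cdot>\<^sub>m A) = (a * b) \<cdot>\<^sub>m (A :: 'a::semigroup_mult mat)"
  by (intro eq_matI) (auto simp: mult.assoc)

lemma one_smult_mat [simp]: "(1::'a::monoid_mult) \<cdot>\<^sub>m A = A"
  by (intro eq_matI) auto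

lemma mult_minv: assumes A: "A \<in> carrier_mat n n" and "det A \<noteq> 0"
  shows "A * minv A = 1\<^sub>m n"
proof -
  have "A * minv A = inverse (det A) \<cdot>\<^sub>m (A * adj_mat A)"
    unfolding minv_def using A adj_mat(1)[OF A] by (rule mult_smult_distrib)
  then show ?thesis using assms by (simp add: adj_mat(2)[OF A] smult_smult_mat)
qed

lemma minv_mult_self: assumes A: "A \<in> carrier_mat n n" and "det A \<noteq> 0"
  shows "minv A * A = 1\<^sub>m n"
proof -
  have "minv A * A = inverse (det A) \<cdot>\<^sub>m (adj_mat A * A)"
    unfolding minv_def by (rule mult_smult_assoc_mat[OF adj_mat(1)[OF A] A])
  then show ?thesis using assms by (simp add: adj_mat(3)[OF A] smult_smult_mat)
qed

lemma det_minv: assumes A: "A \<in> carrier_mat n n" and "det A \<noteq> 0"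
  shows "det (minv A) = inverse (det A)"
  using det_mult[OF A minv_carrier[OF A]] mult_minv[OF assms] assms by (simp add: field_simps)

lemma minv_eqI:
  assumes A: "A \<in> carrier_mat n n" and X: "X \<in> carrier_mat n n" and AX: "A * X = 1\<^sub>m n"
  shows "minv A = X"
proof -
  have "det A * det X = 1" using det_mult[OF A X] AX by simp
  then have "det A \<noteq> 0" by auto
  have "minv A = minv A * (A * X)" using AX right_mult_one_mat[OF minv_carrier[OF A]] by simp
  also have "\<dots> = (minv A * A) * X" using assoc_mult_mat[OF minv_carrier[OF A] A X] by simp
  also have "\<dots> = X" using minv_mult_self[OF A \<open>det A \<noteq> 0\<close>] X by simp
  finally show ?thesis .
qed

lemma minv_mult:
  assumes A: "A \<in> carrier_mat n n" and B: "B \<in> carrier_mat n n"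
    and "det A \<noteq> 0" and "det B \<noteq> 0"
  shows "minv (A * B) = minv B * minv A"
proof (rule minv_eqI)
  have "A * B * (minv B * minv A) = A * ((B * minv B) * minv A)"
    using A B by (simp add: assoc_mult_mat[of _ n n _ n _ n, symmetric])
  also have "\<dots> = 1\<^sub>m n"
    using assms left_mult_one_mat[OF minv_carrier[OF A]] by (simp add: mult_minv)
  finally show "A * B * (minv B * minv A) = 1\<^sub>m n" .
qed (use A B mult_carrier_mat[OF minv_carrier[OF B] minv_carrier[OF A]] in auto)

lemma minv_minv: assumes A: "A \<in> carrier_mat n n" and "det A \<noteq> 0"
  shows "minv (minv A) = A"
  by (rule minv_eqI) (use assms minv_mult_self in auto)

locale nonsingular_regular_mat =
  fixes N :: nat and B :: "complex fls mat"
  assumes B_carrier [simp]: "B \<in> carrier_mat N N"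
    and no_poles_B: "no_poles B"
    and det_B: "det B \<noteq> 0"
begin

lemma dim_B [simp]: "dim_row B = N" "dim_col B = N"
  using carrier_matD[OF B_carrier] by auto

definition regular_multiples :: "complex fls mat set" where
  "regular_multiples = {B * R | R. R \<in> carrier_mat N N \<and> no_poles R}"

lemma regular_multiplesI:
  "R \<in> carrier_mat N N \<Longrightarrow> no_poles R \<Longrightarrow> B * R \<in> regular_multiples"
  unfolding regular_multiples_def by blast

lemma regular_multiplesE:
  assumes "X \<in> regular_multiples"
  obtains R where "R \<in> carrier_mat N N" "no_poles R" "X = B * R"
  using assms unfolding regular_multiples_def by blast

lemma regular_multiples_carrier: "X \<in> regular_multiples \<Longrightarrow> X \<in> carrier_mat N N"
  by (auto elim!: regular_multiplesE intro: mult_carrier_mat[OF B_carrier])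

lemma regular_multiples_add:
  assumes "X \<in> regular_multiples" "Y \<in> regular_multiples"
  shows "X + Y \<in> regular_multiples"
proof -
  obtain R S where "R \<in> carrier_mat N N" "no_poles R" "X = B * R"
    and "S \<in> carrier_mat N N" "no_poles S" "Y = B * S"
    using assms by (auto elim!: regular_multiplesE)
  then show ?thesis
    using mult_add_distrib_mat[OF B_carrier, of R N S] regular_multiplesI[of "R + S"] by auto
qed

lemma regular_multiples_smult:
  assumes "X \<in> regular_multiples" "fls_regular c"
  shows "c \<cdot>\<^sub>m X \<in> regular_multiples"
proof -
  obtain R where "R \<in> carrier_mat N N" "no_poles R" "X = B * R"
    using assms by (auto elim!: regular_multiplesE)
  then show ?thesis
    using assms mult_smult_distrib[OF B_carrier, of R N c] regular_multiplesI[of "c \<cdot>\<^sub>m R"] by auto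
qed

lemma regular_multiples_uminus:
  assumes "X \<in> regular_multiples"
  shows "- X \<in> regular_multiples"
proof -
  obtain R where "R \<in> carrier_mat N N" "no_poles R" "X = B * R"
    using assms by (auto elim!: regular_multiplesE)
  moreover have "- (B * R) = B * (- R)"
    using \<open>R \<in> carrier_mat N N\<close> B_carrier by (intro uminus_mult_right_mat[symmetric]) blast
  ultimately show ?thesis using regular_multiplesI[of "- R"] by auto
qed

lemma regular_multiples_diff:
  "X \<in> regular_multiples \<Longrightarrow> Y \<in> regular_multiples \<Longrightarrow> X - Y \<in> regular_multiples"
  using regular_multiples_add[OF _ regular_multiples_uminus[of Y], of X]
  by (simp add: minus_add_uminus_mat[OF regular_multiples_carrier regular_multiples_carrier])

lemma regular_multiples_mult_right:
  assumes "X \<in> regular_multiples" "S \<in> carrier_mat N N" "no_poles S"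
  shows "X * S \<in> regular_multiples"
proof -
  obtain R where "R \<in> carrier_mat N N" "no_poles R" "X = B * R"
    using assms by (auto elim!: regular_multiplesE)
  then show ?thesis
    using assms assoc_mult_mat[OF B_carrier, of R N S N] regular_multiplesI[of "R * S"] by auto
qed

lemma no_poles_minv_mult:
  assumes "X \<in> regular_multiples"
  shows "no_poles (minv B * X)"
proof -
  obtain R where "R \<in> carrier_mat N N" "no_poles R" "X = B * R"
    using assms by (auto elim!: regular_multiplesE)
  then show ?thesis
    using assoc_mult_mat[OF minv_carrier[OF B_carrier] B_carrier, of R N]
      minv_mult_self[OF B_carrier det_B] by simp
qed

lemma mult_pole_part:
  assumes "C \<in> carrier_mat N N"
  shows "B * (c \<cdot>\<^sub>m minv B + C) = c \<cdot>\<^sub>m 1\<^sub>m N + B * C"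
  using assms mult_add_distrib_mat[OF B_carrier, of "c \<cdot>\<^sub>m minv B" N C]
    mult_smult_distrib[OF B_carrier minv_carrier[OF B_carrier]] mult_minv[OF B_carrier det_B]
  by simp

lemma inverse_congruent:
  assumes M: "M \<in> carrier_mat N N" and Q: "Q \<in> carrier_mat N N" "no_poles Q"
    and MQ: "M * Q = e \<cdot>\<^sub>m 1\<^sub>m N"
    and M_cong: "M - c \<cdot>\<^sub>m 1\<^sub>m N \<in> regular_multiples"
  shows "c \<cdot>\<^sub>m Q - e \<cdot>\<^sub>m 1\<^sub>m N \<in> regular_multiples"
proof -
  have "(M - c \<cdot>\<^sub>m 1\<^sub>m N) * Q = e \<cdot>\<^sub>m 1\<^sub>m N - c \<cdot>\<^sub>m Q"
    using minus_mult_distrib_mat[OF M _ Q(1), of "c \<cdot>\<^sub>m 1\<^sub>m N"] MQ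
      mult_smult_assoc_mat[OF one_carrier_mat Q(1)] Q(1) by simp
  moreover have "- (e \<cdot>\<^sub>m 1\<^sub>m N - c \<cdot>\<^sub>m Q) = c \<cdot>\<^sub>m Q - e \<cdot>\<^sub>m 1\<^sub>m N"
    using Q(1) by (intro eq_matI) auto
  ultimately show ?thesis
    using regular_multiples_uminus[OF regular_multiples_mult_right[OF M_cong Q]] by simp
qed

lemma inverse_near_pole:
  assumes X: "X = c \<cdot>\<^sub>m minv B + C" and C: "C \<in> carrier_mat N N" "no_poles C"
    and c: "fls_regular c"
    and det_X: "det X \<noteq> 0" "fls_subdegree (det B) + fls_subdegree (det X) = 0"
  obtains Q where "Q \<in> carrier_mat N N" "no_poles Q" "minv X = Q * B"
    "c \<cdot>\<^sub>m Q - 1\<^sub>m N \<in> regular_multiples" "B * X - c \<cdot>\<^sub>m 1\<^sub>m N \<in> regular_multiples"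
proof
  have X_carrier: "X \<in> carrier_mat N N" using X C by simp
  define M where "M = B * X"
  have M_carrier: "M \<in> carrier_mat N N" unfolding M_def using mult_carrier_mat[OF B_carrier X_carrier] .
  have M_eq: "M = c \<cdot>\<^sub>m 1\<^sub>m N + B * C" unfolding M_def X by (rule mult_pole_part[OF C(1)])
  show M_cong: "B * X - c \<cdot>\<^sub>m 1\<^sub>m N \<in> regular_multiples"
  proof -
    have "M - c \<cdot>\<^sub>m 1\<^sub>m N = B * C"
      unfolding M_eq using C(1) by (intro eq_matI) auto
    then show ?thesis using regular_multiplesI[OF C] by (simp add: M_def)
  qed
  have "no_poles M" unfolding M_eq using C c no_poles_B by (intro no_poles_add no_poles_mult) auto
  moreover have det_M: "det M \<noteq> 0" "fls_subdegree (det M) = 0"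
    using det_mult[OF B_carrier X_carrier] det_B det_X by (simp_all add: M_def)
  ultimately show "no_poles (minv M)" by (simp add: no_poles_minv)
  show "minv M \<in> carrier_mat N N" using M_carrier by simp
  show "c \<cdot>\<^sub>m minv M - 1\<^sub>m N \<in> regular_multiples"
    using inverse_congruent[OF M_carrier _ \<open>no_poles (minv M)\<close> _ M_cong[folded M_def], of 1]
      mult_minv[OF M_carrier det_M(1)] M_carrier by simp
  have "X = minv B * M"
    using assoc_mult_mat[OF minv_carrier[OF B_carrier] B_carrier X_carrier]
      minv_mult_self[OF B_carrier det_B] X_carrier by (simp add: M_def)
  then show "minv X = minv M * B"
    using minv_mult[OF minv_carrier[OF B_carrier] M_carrier] det_minv[OF B_carrier det_B]
      minv_minv[OF B_carrier det_B] det_B det_M by simp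
qed

lemma dPI_step_at_zero:
  assumes "b0 \<in> carrier_mat N N" "a \<in> carrier_mat N N"
  shows "dPI_step m b0 B a = of_nat m \<cdot>\<^sub>m minv B + - (b0 + B + a)"
  unfolding dPI_step_def using assms by (intro eq_matI) auto

lemma dPI_step_after_zero:
  assumes "b0 \<in> carrier_mat N N" "a \<in> carrier_mat N N" "Q1 \<in> carrier_mat N N"
    and b2: "b2 = dPI_step m b0 B a" and minv_b2: "minv b2 = Q1 * B"
  shows "dPI_step (m + 1) B b2 a = (- of_nat m) \<cdot>\<^sub>m minv B + ((of_nat m + 1) \<cdot>\<^sub>m (Q1 * B) + b0)"
  unfolding dPI_step_def minv_b2 unfolding b2 dPI_step_def
  using assms(1-3) mult_carrier_mat[OF assms(3) B_carrier]
  by (intro eq_matI) (auto simp: algebra_simps)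

lemma dPI_step_factor:
  assumes "b2 \<in> carrier_mat N N" "a \<in> carrier_mat N N"
    and "Q1 \<in> carrier_mat N N" "Q2 \<in> carrier_mat N N"
    and b3: "b3 = dPI_step (m + 1) B b2 a"
    and minv_b2: "minv b2 = Q1 * B" and minv_b3: "minv b3 = Q2 * B"
  shows "dPI_step (m + 2) b2 b3 a = ((of_nat m + 2) \<cdot>\<^sub>m Q2 - (of_nat m + 1) \<cdot>\<^sub>m Q1 + 1\<^sub>m N) * B"
proof -
  let ?c2 = "of_nat m + 2 :: complex fls" and ?c1 = "of_nat m + 1 :: complex fls"
  have Q: "?c2 \<cdot>\<^sub>m Q2 \<in> carrier_mat N N" "?c1 \<cdot>\<^sub>m Q1 \<in> carrier_mat N N"
    using assms(3,4) by auto
  have "(?c2 \<cdot>\<^sub>m Q2 - ?c1 \<cdot>\<^sub>m Q1 + 1\<^sub>m N) * B = (?c2 \<cdot>\<^sub>m Q2 - ?c1 \<cdot>\<^sub>m Q1) * B + B"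
    using add_mult_distrib_mat[OF minus_carrier_mat[OF Q(2)] one_carrier_mat B_carrier] by simp
  also have "\<dots> = ?c2 \<cdot>\<^sub>m (Q2 * B) - ?c1 \<cdot>\<^sub>m (Q1 * B) + B"
    using minus_mult_distrib_mat[OF Q B_carrier] mult_smult_assoc_mat[OF assms(3) B_carrier]
      mult_smult_assoc_mat[OF assms(4) B_carrier] by simp
  also have "\<dots> = dPI_step (m + 2) b2 b3 a"
    unfolding dPI_step_def minv_b3 unfolding b3 dPI_step_def minv_b2
    using assms(1-4) mult_carrier_mat[OF assms(3) B_carrier] mult_carrier_mat[OF assms(4) B_carrier]
    by (intro eq_matI) (auto simp: algebra_simps)
  finally show ?thesis by simp
qed

lemma factor_inverse_congruent:
  fixes n :: "complex fls" and Q1 Q2 :: "complex fls mat"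
  defines "G \<equiv> (n + 2) \<cdot>\<^sub>m Q2 - (n + 1) \<cdot>\<^sub>m Q1 + 1\<^sub>m N"
  assumes n: "fls_regular n" and Q1: "Q1 \<in> carrier_mat N N" and Q2: "Q2 \<in> carrier_mat N N"
    and Q1_cong: "n \<cdot>\<^sub>m Q1 - 1\<^sub>m N \<in> regular_multiples"
    and Q2_cong: "(- n) \<cdot>\<^sub>m Q2 - 1\<^sub>m N \<in> regular_multiples"
    and Q3: "Q3 \<in> carrier_mat N N" "no_poles Q3" "G * Q3 = 1\<^sub>m N"
  shows "(- (n + 3)) \<cdot>\<^sub>m Q3 - n \<cdot>\<^sub>m 1\<^sub>m N \<in> regular_multiples"
proof -
  have G: "G \<in> carrier_mat N N" unfolding G_def using Q1 Q2 by auto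
  have "n \<cdot>\<^sub>m G - (- (n + 3)) \<cdot>\<^sub>m 1\<^sub>m N
      = (- (n + 2)) \<cdot>\<^sub>m ((- n) \<cdot>\<^sub>m Q2 - 1\<^sub>m N) + (- (n + 1)) \<cdot>\<^sub>m (n \<cdot>\<^sub>m Q1 - 1\<^sub>m N)"
    unfolding G_def using Q1 Q2 by (intro eq_matI) (auto simp: algebra_simps)
  then have G_cong: "n \<cdot>\<^sub>m G - (- (n + 3)) \<cdot>\<^sub>m 1\<^sub>m N \<in> regular_multiples"
    using regular_multiples_add[OF regular_multiples_smult[OF Q2_cong, of "- (n + 2)"]
        regular_multiples_smult[OF Q1_cong, of "- (n + 1)"]] n
    by simp
  have "(n \<cdot>\<^sub>m G) * Q3 = n \<cdot>\<^sub>m 1\<^sub>m N"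
    using mult_smult_assoc_mat[OF G Q3(1)] Q3(3) by simp
  then show ?thesis
    using inverse_congruent[OF _ Q3(1,2) _ G_cong] G by simp
qed

lemma dPI_step_confined:
  fixes m :: nat and Q1 Q2 :: "complex fls mat"
  defines "n \<equiv> of_nat m :: complex fls"
  defines "G \<equiv> (n + 2) \<cdot>\<^sub>m Q2 - (n + 1) \<cdot>\<^sub>m Q1 + 1\<^sub>m N"
  assumes a: "a \<in> carrier_mat N N" "no_poles a" and b3: "b3 \<in> carrier_mat N N"
    and Q1: "Q1 \<in> carrier_mat N N" "no_poles Q1" and Q2: "Q2 \<in> carrier_mat N N" "no_poles Q2"
    and Q1_cong: "n \<cdot>\<^sub>m Q1 - 1\<^sub>m N \<in> regular_multiples"
    and Q2_cong: "(- n) \<cdot>\<^sub>m Q2 - 1\<^sub>m N \<in> regular_multiples"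
    and b3_cong: "B * b3 - (- n) \<cdot>\<^sub>m 1\<^sub>m N \<in> regular_multiples"
    and b4: "b4 = G * B" and det_b4: "det b4 \<noteq> 0" "fls_subdegree (det b4) = fls_subdegree (det B)"
  shows "no_poles (dPI_step (m + 3) b3 b4 a)"
proof -
  have G: "G \<in> carrier_mat N N" "no_poles G"
    unfolding G_def n_def using Q1 Q2
    by (auto intro!: no_poles_add[of _ N N] no_poles_diff[of _ N N] no_poles_smult)
  have det_G: "det G \<noteq> 0" "fls_subdegree (det G) = 0"
    using det_b4 det_B unfolding b4 det_mult[OF G(1) B_carrier] by auto
  define Q3 where "Q3 = minv G"
  have Q3: "Q3 \<in> carrier_mat N N" "no_poles Q3" "G * Q3 = 1\<^sub>m N"
    unfolding Q3_def using G det_G by (auto simp: no_poles_minv mult_minv)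
  have "(n + 3) \<cdot>\<^sub>m Q3 - B * b3
      = - ((- (n + 3)) \<cdot>\<^sub>m Q3 - n \<cdot>\<^sub>m 1\<^sub>m N) - (B * b3 - (- n) \<cdot>\<^sub>m 1\<^sub>m N)"
    using Q3(1) mult_carrier_mat[OF B_carrier b3] by (intro eq_matI) (auto simp: algebra_simps)
  then have pole_cancels: "(n + 3) \<cdot>\<^sub>m Q3 - B * b3 \<in> regular_multiples"
    using regular_multiples_diff[OF regular_multiples_uminus b3_cong]
      factor_inverse_congruent[OF _ Q1(1) Q2(1) Q1_cong Q2_cong Q3[unfolded G_def]]
    by (simp add: n_def)
  have Bi: "minv B \<in> carrier_mat N N" by simp
  have "minv B * ((n + 3) \<cdot>\<^sub>m Q3 - B * b3) = (n + 3) \<cdot>\<^sub>m (minv B * Q3) - b3"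
    using mult_minus_distrib_mat[OF Bi smult_carrier_mat[OF Q3(1)] mult_carrier_mat[OF B_carrier b3]]
      mult_smult_distrib[OF Bi Q3(1)] assoc_mult_mat[OF Bi B_carrier b3]
      minv_mult_self[OF B_carrier det_B] b3
    by simp
  moreover have "minv b4 = minv B * Q3"
    unfolding b4 Q3_def using minv_mult[OF G(1) B_carrier det_G(1) det_B] .
  moreover have "of_nat (m + 3) = n + 3" by (simp add: n_def)
  ultimately have b5: "dPI_step (m + 3) b3 b4 a = minv B * ((n + 3) \<cdot>\<^sub>m Q3 - B * b3) - b4 - a"
    unfolding dPI_step_def by simp
  have "b4 \<in> carrier_mat N N" "no_poles b4"
    unfolding b4 using mult_carrier_mat[OF G(1) B_carrier] no_poles_mult[OF G(1) B_carrier G(2) no_poles_B]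
    by auto
  moreover have "minv B * ((n + 3) \<cdot>\<^sub>m Q3 - B * b3) \<in> carrier_mat N N"
    using mult_carrier_mat[OF Bi regular_multiples_carrier[OF pole_cancels]] .
  ultimately show ?thesis
    unfolding b5 using no_poles_minv_mult[OF pole_cancels] a
    by (intro no_poles_diff[of _ N N] minus_carrier_mat) auto
qed

end

theorem theorem1:
  fixes N r m :: nat and alpha :: "complex mat"
    and b0 b1 b2 b3 b4 b5 :: "complex fls mat"
  assumes "N \<ge> 1" and "1 \<le> r" and "r \<le> N" and "m \<ge> 2"
    and "alpha \<in> carrier_mat N N"
    and "b0 \<in> carrier_mat N N" and "b1 \<in> carrier_mat N N"
    and "no_poles b0" and "no_poles b1"
    and "\<forall>i<r. \<forall>j<N. fls_nth (b1 $$ (i,j)) 0 = 0"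
    and "exact_order (det b1) (int r)"
    and "b2 = dPI_step m b0 b1 (const_mat alpha)"
    and "b3 = dPI_step (m+1) b1 b2 (const_mat alpha)"
    and "b4 = dPI_step (m+2) b2 b3 (const_mat alpha)"
    and "b5 = dPI_step (m+3) b3 b4 (const_mat alpha)"
    and "exact_order (det b2) (- int r)"
    and "exact_order (det b3) (- int r)"
    and "exact_order (det b4) (int r)"
    and "exact_order (det b5) 0"
  shows "no_poles b5 \<and> det (coeff_mat b5 0) \<noteq> 0"
proof -
  let ?a = "const_mat alpha" and ?n = "of_nat m :: complex fls"
  note b0_reg = assms(6,8) and orders = assms(11,16-19)[unfolded exact_order_def]
  have a: "?a \<in> carrier_mat N N" "no_poles ?a"
    using assms(5) no_poles_const_mat by (auto simp: const_mat_def)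
  interpret nonsingular_regular_mat N b1
    using assms(7,9) orders(1) by unfold_locales auto
  have b2: "b2 = ?n \<cdot>\<^sub>m minv b1 + - (b0 + b1 + ?a)"
    using dPI_step_at_zero[OF b0_reg(1) a(1)] assms(12) by simp
  have "- (b0 + b1 + ?a) \<in> carrier_mat N N" "no_poles (- (b0 + b1 + ?a))"
    using b0_reg a assms(7,9) by (auto intro!: no_poles_add[of _ N N])
  then obtain Q1 where Q1: "Q1 \<in> carrier_mat N N" "no_poles Q1" "minv b2 = Q1 * b1"
      "?n \<cdot>\<^sub>m Q1 - 1\<^sub>m N \<in> regular_multiples" "b1 * b2 - ?n \<cdot>\<^sub>m 1\<^sub>m N \<in> regular_multiples"
    by (rule inverse_near_pole[OF b2]) (use orders in simp_all)
  have b3: "b3 = (- ?n) \<cdot>\<^sub>m minv b1 + ((?n + 1) \<cdot>\<^sub>m (Q1 * b1) + b0)"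
    using dPI_step_after_zero[OF b0_reg(1) a(1) Q1(1) assms(12) Q1(3)] assms(13) by simp
  have "(?n + 1) \<cdot>\<^sub>m (Q1 * b1) + b0 \<in> carrier_mat N N" "no_poles ((?n + 1) \<cdot>\<^sub>m (Q1 * b1) + b0)"
    using b0_reg Q1 assms(7,9) by (auto intro!: no_poles_add[of _ N N] no_poles_smult no_poles_mult[of _ N N])
  then obtain Q2 where Q2: "Q2 \<in> carrier_mat N N" "no_poles Q2" "minv b3 = Q2 * b1"
      "(- ?n) \<cdot>\<^sub>m Q2 - 1\<^sub>m N \<in> regular_multiples"
      "b1 * b3 - (- ?n) \<cdot>\<^sub>m 1\<^sub>m N \<in> regular_multiples"
    by (rule inverse_near_pole[OF b3]) (use orders in simp_all)
  have "b4 = ((?n + 2) \<cdot>\<^sub>m Q2 - (?n + 1) \<cdot>\<^sub>m Q1 + 1\<^sub>m N) * b1"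
    using dPI_step_factor[OF _ a(1) Q1(1) Q2(1) _ Q1(3) Q2(3)] assms(12-14) b0_reg a by simp
  then have "no_poles b5"
    using dPI_step_confined[OF a _ Q1(1,2) Q2(1,2) Q1(4) Q2(4,5)] assms(12,13,15) b0_reg a orders
    by simp
  moreover have "fls_nth (det b5) 0 \<noteq> 0"
    using orders(5) nth_fls_subdegree_nonzero[of "det b5"] by simp
  ultimately show ?thesis by (simp add: det_coeff_mat_0)
qed

end
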